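(* Assume the setup and monomial order in the context. For every $v\in M$ and all $j_1,j_2,i_1,i_2\in[n]$, the monomial $v_{j_1,i_1}v^\dagger_{i_2,j_2}$ does not lie in $\mathrm{Tip}(I)$ if and only if $(i_1,i_2)\ne(n,1)$ and $(j_1,j_2)\ne(n,1)$.
   Context: Let $k$ be a field and $n\ge 2$ an integer; write $[n]=\{1,\dots,n\}$ and $r(i)=n+1-i$. Let $X=\{u_{j,i},u^*_{j,i}:(j,i)\in[n]^2\}$ be a set of $2n^2$ distinct symbols and let $*$ be the involution of $X$ exchanging $u_{j,i}$ and $u^*_{j,i}$. Let $k\langle X\rangle$ be the free unital $k$-algebra on $X$. For an $n\times n$ matrix $v=(v_{j,i})$ with entries in $X$ define $n\times n$ matrices $v^t,v^\star,v^\dagger$ with entries in $X$ by $v^t_{j,i}=v_{i,j}$, $v^\star_{j,i}=(v_{r(j),r(i)})^*$, $v^\dagger_{j,i}=(v_{r(i),r(j)})^*$. Let $u=(u_{j,i})$ and $M=\{u,u^t,u^\star,u^\dagger\}$. Let $I$ be the two-sided ideal generated by $R=\{\sum_{s=1}^n v_{j,r(s)}v^\dagger_{s,r(i)}-\delta_{j,i}1: v\in M,(j,i)\in[n]^2\}$. Monomial order: let $\le$ be the total order on $X$ with $u^*_{t,s}<u_{j,i}$ for all indices, $u_{t,s}<u_{j,i}$ iff $(t,s)<(j,i)$ lexicographically, and $u^*_{t,s}<u^*_{j,i}$ iff $(j,i)<(t,s)$ lexicographically; extend it degree-lexicographically to monomials. For $0\ne p\in k\langle X\rangle$, $\mathrm{tip}(p)$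 is the $\le$-largest monomial with nonzero coefficient in $p$; $\mathrm{Tip}(I)=\{\mathrm{tip}(p):0\ne p\in I\}$. *)

theory Defs
  imports Main
begin

text \<open>Symbols of X: U j i stands for u_{j,i}, Ustar j i for u*_{j,i}; indices meant in [n] = {1..n}.\<close>
datatype sym = U nat nat | Ustar nat nat

text \<open>Monomials of the free algebra are words over X; elements of k<X> are
  coefficient functions on words (the ideal I only contains finitely supported ones).\<close>
type_synonym 'k fpoly = "sym list \<Rightarrow> 'k"

fun sstar :: "sym \<Rightarrow> sym" where
  "sstar (U j i) = Ustar j i"
| "sstar (Ustar j i) = U j i"

definition rev_idx :: "nat \<Rightarrow> nat \<Rightarrow> nat" where
  "rev_idx n i = n + 1 - i"

text \<open>Matrices with entries in X, as functions of (row, column).\<close>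
type_synonym smat = "nat \<Rightarrow> nat \<Rightarrow> sym"

definition mat_t :: "smat \<Rightarrow> smat" where
  "mat_t v = (\<lambda>j i. v i j)"

definition mat_star :: "nat \<Rightarrow> smat \<Rightarrow> smat" where
  "mat_star n v = (\<lambda>j i. sstar (v (rev_idx n j) (rev_idx n i)))"

definition mat_dag :: "nat \<Rightarrow> smat \<Rightarrow> smat" where
  "mat_dag n v = (\<lambda>j i. sstar (v (rev_idx n i) (rev_idx n j)))"

definition umat :: smat where
  "umat = (\<lambda>j i. U j i)"

definition Mset :: "nat \<Rightarrow> smat set" where
  "Mset n = {umat, mat_t umat, mat_star n umat, mat_dag n umat}"

definition monom :: "sym list \<Rightarrow> 'k::field fpoly" where
  "monom w = (\<lambda>w'. if w' = w then 1 else 0)"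

definition rel :: "nat \<Rightarrow> smat \<Rightarrow> nat \<Rightarrow> nat \<Rightarrow> 'k::field fpoly" where
  "rel n v j i = (\<lambda>w. (\<Sum>s\<in>{1..n}. monom [v j (rev_idx n s), mat_dag n v s (rev_idx n i)] w)
                     - (if j = i then monom [] w else 0))"

definition Rset :: "nat \<Rightarrow> 'k::field fpoly set" where
  "Rset n = {rel n v j i | v j i. v \<in> Mset n \<and> j \<in> {1..n} \<and> i \<in> {1..n}}"

text \<open>Product a * p * b of a polynomial p with monomials a and b.\<close>
definition mmult :: "sym list \<Rightarrow> 'k::field fpoly \<Rightarrow> sym list \<Rightarrow> 'k fpoly" where
  "mmult a p b = (\<lambda>w. if length a + length b \<le> length w \<and> take (length a) w = a
                          \<and> drop (length w - length b) w = b
                       then p (drop (length a) (take (length w - length b) w)) else 0)"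

inductive_set ideal_gen :: "'k::field fpoly set \<Rightarrow> 'k fpoly set" for G where
  zero: "(\<lambda>_. 0) \<in> ideal_gen G"
| gen: "g \<in> G \<Longrightarrow> g \<in> ideal_gen G"
| add: "p \<in> ideal_gen G \<Longrightarrow> q \<in> ideal_gen G \<Longrightarrow> (\<lambda>w. p w + q w) \<in> ideal_gen G"
| smult_mmult: "p \<in> ideal_gen G \<Longrightarrow> (\<lambda>w. c * mmult a p b w) \<in> ideal_gen G"

definition Iideal :: "nat \<Rightarrow> 'k::field fpoly set" where
  "Iideal n = ideal_gen (Rset n)"

fun sym_less :: "sym \<Rightarrow> sym \<Rightarrow> bool" where
  "sym_less (Ustar _ _) (U _ _) = True"
| "sym_less (U _ _) (Ustar _ _) = False"
| "sym_less (U t s) (U j i) = (t < j \<or> (t = j \<and> s < i))"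
| "sym_less (Ustar t s) (Ustar j i) = (j < t \<or> (j = t \<and> i < s))"

definition mono_less :: "sym list \<Rightarrow> sym list \<Rightarrow> bool" where
  "mono_less w1 w2 = (length w1 < length w2 \<or>
     (length w1 = length w2 \<and>
      (\<exists>k < length w1. take k w1 = take k w2 \<and> sym_less (w1 ! k) (w2 ! k))))"

definition is_tip :: "'k::field fpoly \<Rightarrow> sym list \<Rightarrow> bool" where
  "is_tip p w = (p w \<noteq> 0 \<and> (\<forall>w'. p w' \<noteq> 0 \<longrightarrow> w' = w \<or> mono_less w' w))"

definition Tip :: "'k::field fpoly set \<Rightarrow> sym list set" where
  "Tip J = {w. \<exists>p\<in>J. p \<noteq> (\<lambda>_. 0) \<and> is_tip p w}"

end

theory Submission
  imports Defs "HOL.Rat" "HOL-Combinatorics.Transposition"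
begin

(*
  A monomial w0 lies outside Tip(I) as soon as some linear functional on k<X> vanishes on I,
  is nonzero at w0 and vanishes at every monomial below w0.  Such functionals come from
  representations satisfying the relations R: on functions on the affine group of Q, let
  u_{ab} act by sum_i A_{ai} B_{ib} (right translation by g_i) and u*_{cd} by
  sum_j A^-1_{jc} B^-1_{dj} (right translation by g_j^-1); the relations hold for all
  invertible A and B.  Take g_p = (2,0), g_q = (1,1) and g_i = 1 otherwise.  Applying a word
  of length at most two to the indicator function of g_p g_q^-1 and evaluating at 1 kills
  every such word except the u_{ab} u*_{cd}, where it gives the (a,c) entry of A E_pq A^-1
  times an entry of a conjugate of an off-diagonal unit matrix by B.  Linear combinations of
  these conjugates give every trace-free matrix, in particular one whose (a,c) entry is
  nonzero while the entries belonging to smaller monomials vanish, as long as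
  (a,c) <> (n,n).  The words u*_{ab} u_{cd} are handled alike, using g_q^-1 g_p.

  Conversely, for (i1,i2) = (n,1) the word is the leading monomial of a relation in R, and
  the case (j1,j2) = (n,1) reduces to it because M is closed under transposition.
*)

lemma rev_idx_rev_idx [simp]: "i \<in> {1..n} \<Longrightarrow> rev_idx n (rev_idx n i) = i"
  by (auto simp: rev_idx_def)

lemma rev_idx_mem [simp]: "i \<in> {1..n} \<Longrightarrow> rev_idx n i \<in> {1..n}"
  by (auto simp: rev_idx_def)

lemma rev_idx_Suc_0 [simp]: "rev_idx n (Suc 0) = n"
  by (simp add: rev_idx_def)

lemma rev_idx_eq_iff: "i \<in> {1..n} \<Longrightarrow> j \<in> {1..n} \<Longrightarrow> rev_idx n i = rev_idx n j \<longleftrightarrow> i = j"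
  by (auto simp: rev_idx_def)

lemma rev_idx_eq_n_iff: "i \<in> {1..n} \<Longrightarrow> rev_idx n i = n \<longleftrightarrow> i = 1"
  by (auto simp: rev_idx_def)

lemma sum_rev_idx: "(\<Sum>s\<in>{1..n}. F (rev_idx n s)) = (\<Sum>s\<in>{1..n}. F s)"
  by (rule sum.reindex_bij_witness[where i="rev_idx n" and j="rev_idx n"]) (auto simp: rev_idx_def)

section \<open>Linear functionals vanishing on an ideal\<close>

lemma mmult_append [simp]: "mmult a p b (a @ x @ b) = p x"
  by (simp add: mmult_def)

lemma mmult_nonzeroE:
  assumes "mmult a p b w \<noteq> 0"
  obtains x where "w = a @ x @ b" and "p x \<noteq> 0"
proof -
  let ?x = "drop (length a) (take (length w - length b) w)"
  from assms have len: "length a + length b \<le> length w" and pre: "take (length a) w = a"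
    and suf: "drop (length w - length b) w = b" and px: "p ?x \<noteq> 0"
    by (auto simp: mmult_def split: if_splits)
  have "length a \<le> length w - length b"
    using len by arith
  then have "take (length a) (take (length w - length b) w) = a"
    using pre by (simp add: min_def)
  then have "take (length w - length b) w = a @ ?x"
    by (metis append_take_drop_id)
  then have "w = a @ ?x @ b"
    using suf by (metis append.assoc append_take_drop_id)
  with px show thesis using that by blast
qed

lemma support_mmult_subset:
  "{w. c * mmult a p b w \<noteq> 0} \<subseteq> (\<lambda>x. a @ x @ b) ` {x. p x \<noteq> 0}"
proof
  fix w assume "w \<in> {w. c * mmult a p b w \<noteq> 0}"
  then have "mmult a p b w \<noteq> 0" by simp
  then obtain x where "w = a @ x @ b" "p x \<noteq> 0" by (rule mmult_nonzeroE)
  then show "w \<in> (\<lambda>x. a @ x @ b) ` {x. p x \<noteq> 0}" by blast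
qed

definition lin_ext :: "(sym list \<Rightarrow> 'k) \<Rightarrow> 'k::field fpoly \<Rightarrow> 'k" where
  "lin_ext \<Psi> P = (\<Sum>w | P w \<noteq> 0. P w * \<Psi> w)"

definition annihilates :: "'k::field fpoly set \<Rightarrow> (sym list \<Rightarrow> 'k) \<Rightarrow> bool" where
  "annihilates J \<Psi> \<longleftrightarrow> (\<forall>P\<in>J. lin_ext \<Psi> P = 0)"

lemma lin_ext_eq_sum:
  "finite S \<Longrightarrow> {w. P w \<noteq> 0} \<subseteq> S \<Longrightarrow> lin_ext \<Psi> P = (\<Sum>w\<in>S. P w * \<Psi> w)"
  unfolding lin_ext_def by (rule sum.mono_neutral_left) auto

lemma lin_ext_add:
  assumes "finite {w. p w \<noteq> 0}" "finite {w. q w \<noteq> 0}"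
  shows "lin_ext \<Psi> (\<lambda>w. p w + q w) = lin_ext \<Psi> p + lin_ext \<Psi> q"
proof -
  let ?S = "{w. p w \<noteq> 0} \<union> {w. q w \<noteq> 0}"
  have "finite ?S" using assms by simp
  then show ?thesis
    by (subst (1 2 3) lin_ext_eq_sum[of ?S]) (auto simp: distrib_right sum.distrib)
qed

lemma lin_ext_mmult:
  assumes fin: "finite {x. p x \<noteq> 0}"
  shows "lin_ext \<Psi> (\<lambda>w. c * mmult a p b w) = c * lin_ext (\<lambda>x. \<Psi> (a @ x @ b)) p"
proof -
  let ?S = "{x. p x \<noteq> 0}"
  have "lin_ext \<Psi> (\<lambda>w. c * mmult a p b w)
      = (\<Sum>w\<in>(\<lambda>x. a @ x @ b) ` ?S. c * mmult a p b w * \<Psi> w)"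
    using fin by (intro lin_ext_eq_sum support_mmult_subset) simp
  also have "\<dots> = (\<Sum>x\<in>?S. c * (p x * \<Psi> (a @ x @ b)))"
    by (subst sum.reindex) (auto intro: inj_onI simp: mult.assoc)
  finally show ?thesis
    by (simp add: lin_ext_def sum_distrib_left)
qed

lemma finite_support_ideal_gen:
  assumes "\<And>g. g \<in> G \<Longrightarrow> finite {w. g w \<noteq> 0}" and "p \<in> ideal_gen G"
  shows "finite {w. p w \<noteq> 0}"
  using assms(2)
proof induction
  case (add p q)
  then show ?case
    by (auto intro: finite_subset[of _ "{w. p w \<noteq> 0} \<union> {w. q w \<noteq> 0}"])
next
  case (smult_mmult p c a b)
  show ?case
    using smult_mmult.IH by (rule finite_subset[OF support_mmult_subset finite_imageI])
qed (simp_all add: assms(1))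

lemma annihilates_ideal_gen:
  assumes fin: "\<And>g. g \<in> G \<Longrightarrow> finite {w. g w \<noteq> 0}"
    and gen: "\<And>g a b. g \<in> G \<Longrightarrow> lin_ext (\<lambda>x. \<Psi> (a @ x @ b)) g = 0"
  shows "annihilates (ideal_gen G) \<Psi>"
proof -
  have in_ideal: "\<forall>a b. lin_ext (\<lambda>x. \<Psi> (a @ x @ b)) p = 0" if "p \<in> ideal_gen G" for p
    using that
  proof induction
    case zero
    then show ?case by (simp add: lin_ext_def)
  next
    case (gen g)
    then show ?case by (simp add: assms(2))
  next
    case (add p q)
    then show ?case
      by (simp add: lin_ext_add finite_support_ideal_gen[OF fin])
  next
    case (smult_mmult p c a' b')
    show ?case
    proof (intro allI)
      fix a b
      have "lin_ext (\<lambda>x. \<Psi> (a @ x @ b)) (\<lambda>w. c * mmult a' p b' w)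
          = c * lin_ext (\<lambda>x. \<Psi> ((a @ a') @ x @ (b' @ b))) p"
        using finite_support_ideal_gen[OF fin smult_mmult.hyps] by (simp add: lin_ext_mmult)
      then show "lin_ext (\<lambda>x. \<Psi> (a @ x @ b)) (\<lambda>w. c * mmult a' p b' w) = 0"
        using smult_mmult.IH[rule_format, of "a @ a'" "b' @ b"] by simp
    qed
  qed
  show ?thesis
    unfolding annihilates_def using in_ideal[THEN spec, THEN spec, of _ "[]" "[]"] by simp
qed

lemma sum_monom_times:
  assumes "finite S" "u \<in> S"
  shows "(\<Sum>w\<in>S. monom u w * F w) = F u"
proof -
  have "(\<Sum>w\<in>S. monom u w * F w) = (\<Sum>w\<in>S. if w = u then F w else 0)"
    by (rule sum.cong) (auto simp: monom_def)
  then show ?thesis using assms by simp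
qed

lemma support_rel_subset:
  "{w. (rel n v j i :: 'k::field fpoly) w \<noteq> 0}
     \<subseteq> (\<lambda>s. [v j (rev_idx n s), mat_dag n v s (rev_idx n i)]) ` {1..n} \<union> {[]}"
proof
  fix w assume "w \<in> {w. (rel n v j i :: 'k fpoly) w \<noteq> 0}"
  then show "w \<in> (\<lambda>s. [v j (rev_idx n s), mat_dag n v s (rev_idx n i)]) ` {1..n} \<union> {[]}"
    by (rule contrapos_pp) (auto simp: rel_def monom_def intro!: sum.neutral)
qed

lemma finite_support_rel: "finite {w. (rel n v j i :: 'k::field fpoly) w \<noteq> 0}"
  by (rule finite_subset[OF support_rel_subset]) simp

lemma lin_ext_rel:
  "lin_ext \<Psi> (rel n v j i) = (\<Sum>s\<in>{1..n}. \<Psi> [v j (rev_idx n s), mat_dag n v s (rev_idx n i)])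
     - (if j = i then \<Psi> [] else 0)"
proof -
  let ?ws = "\<lambda>s. [v j (rev_idx n s), mat_dag n v s (rev_idx n i)]"
  let ?S = "?ws ` {1..n} \<union> {[]}"
  have "lin_ext \<Psi> (rel n v j i) = (\<Sum>w\<in>?S. rel n v j i w * \<Psi> w)"
    by (rule lin_ext_eq_sum[OF _ support_rel_subset]) simp
  also have "\<dots> = (\<Sum>w\<in>?S. \<Sum>s\<in>{1..n}. monom (?ws s) w * \<Psi> w)
      - (if j = i then \<Sum>w\<in>?S. monom [] w * \<Psi> w else 0)"
    by (simp add: rel_def left_diff_distrib sum_distrib_right sum_subtractf)
  also have "\<dots> = (\<Sum>s\<in>{1..n}. \<Psi> (?ws s)) - (if j = i then \<Psi> [] else 0)"
    by (subst sum.swap) (simp add: sum_monom_times)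
  finally show ?thesis .
qed

lemma finite_support_Iideal: "P \<in> Iideal n \<Longrightarrow> finite {w. P w \<noteq> 0}"
  unfolding Iideal_def by (rule finite_support_ideal_gen) (auto simp: Rset_def finite_support_rel)

lemma lin_ext_sum_list: "lin_ext (\<lambda>w. \<Sum>x\<leftarrow>xs. F x w) P = (\<Sum>x\<leftarrow>xs. lin_ext (F x) P)"
  by (induction xs) (simp_all add: lin_ext_def distrib_left sum.distrib)

lemma annihilates_scale: "annihilates J \<Psi> \<Longrightarrow> annihilates J (\<lambda>w. c * \<Psi> w)"
  by (simp add: annihilates_def lin_ext_def mult.left_commute[of _ c] flip: sum_distrib_left)

lemma annihilates_sum_list:
  assumes "\<And>x. x \<in> set xs \<Longrightarrow> annihilates J (F x)"
  shows "annihilates J (\<lambda>w. \<Sum>x\<leftarrow>xs. F x w)"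
proof -
  have "(\<Sum>x\<leftarrow>xs. lin_ext (F x) P) = 0" if "P \<in> J" for P
    using assms that by (induction xs) (auto simp: annihilates_def)
  then show ?thesis by (simp add: annihilates_def lin_ext_sum_list)
qed

lemma notin_Tip_if_annihilated:
  assumes fin: "\<And>P. P \<in> J \<Longrightarrow> finite {w. P w \<noteq> 0}"
    and ann: "annihilates J \<Psi>" and nonzero: "\<Psi> w0 \<noteq> 0"
    and below: "\<And>w. mono_less w w0 \<Longrightarrow> \<Psi> w = 0"
  shows "w0 \<notin> Tip J"
proof
  assume "w0 \<in> Tip J"
  then obtain P where P: "P \<in> J" "is_tip P w0"
    unfolding Tip_def by blast
  then have Pw0: "P w0 \<noteq> 0" and lower: "\<And>w. P w \<noteq> 0 \<Longrightarrow> w = w0 \<or> mono_less w w0"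
    by (auto simp: is_tip_def)
  have "lin_ext \<Psi> P = (\<Sum>w | P w \<noteq> 0. if w = w0 then P w0 * \<Psi> w0 else 0)"
    unfolding lin_ext_def by (rule sum.cong) (auto dest: lower below)
  also have "\<dots> = P w0 * \<Psi> w0"
    using fin[OF P(1)] Pw0 by simp
  finally show False
    using ann P(1) Pw0 nonzero by (simp add: annihilates_def)
qed

lemma mono_less_length2E:
  assumes "mono_less w [x0, y0]"
  obtains "length w < 2"
    | x y where "w = [x, y]" and "sym_less x x0 \<or> (x = x0 \<and> sym_less y y0)"
proof (cases "length w < 2")
  case False
  with assms have "length w = 2"
    by (auto simp: mono_less_def)
  then obtain x y where w: "w = [x, y]"
    by (auto simp: numeral_2_eq_2 length_Suc_conv)
  from assms obtain k where "k < Suc (Suc 0)" "take k w = take k [x0, y0]"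
    "sym_less (w ! k) ([x0, y0] ! k)"
    unfolding mono_less_def w by auto
  then have "sym_less x x0 \<or> (x = x0 \<and> sym_less y y0)"
    unfolding w by (cases k) (auto simp: less_Suc_eq)
  with w that(2) show thesis by blast
qed (rule that(1))

section \<open>A representation satisfying the relations\<close>

definition inverse_on :: "nat \<Rightarrow> (nat \<Rightarrow> nat \<Rightarrow> 'k::field) \<Rightarrow> (nat \<Rightarrow> nat \<Rightarrow> 'k) \<Rightarrow> bool" where
  "inverse_on n X Y \<longleftrightarrow>
     (\<forall>i\<in>{1..n}. \<forall>j\<in>{1..n}. (\<Sum>k\<in>{1..n}. X i k * Y k j) = (if i = j then 1 else 0))"

lemma inverse_on_contract:
  assumes "inverse_on n X Y"
  shows "(\<Sum>k\<in>{1..n}. \<Sum>i\<in>{1..n}. \<Sum>j\<in>{1..n}. X i k * Y k j * F i j) = (\<Sum>i\<in>{1..n}. F i i)"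
proof -
  have "(\<Sum>k\<in>{1..n}. \<Sum>i\<in>{1..n}. \<Sum>j\<in>{1..n}. X i k * Y k j * F i j)
      = (\<Sum>i\<in>{1..n}. \<Sum>j\<in>{1..n}. \<Sum>k\<in>{1..n}. X i k * Y k j * F i j)"
    by (subst sum.swap) (rule sum.cong[OF refl], rule sum.swap)
  also have "\<dots> = (\<Sum>i\<in>{1..n}. \<Sum>j\<in>{1..n}. (\<Sum>k\<in>{1..n}. X i k * Y k j) * F i j)"
    by (simp add: sum_distrib_right)
  also have "\<dots> = (\<Sum>i\<in>{1..n}. \<Sum>j\<in>{1..n}. if i = j then F i j else 0)"
    using assms by (intro sum.cong refl) (simp add: inverse_on_def)
  finally show ?thesis by simp
qed

type_synonym aff = "rat \<times> rat"

(* (s, t) stands for the affine map x \<mapsto> s x + t of Q; aff_mult is composition. *)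
fun aff_mult :: "aff \<Rightarrow> aff \<Rightarrow> aff" where
  "aff_mult (s, t) (s', t') = (s * s', t + s * t')"

locale relation_rep =
  fixes n :: nat and A A' B B' :: "nat \<Rightarrow> nat \<Rightarrow> 'k::field" and g g' :: "nat \<Rightarrow> aff"
  assumes A_inverse: "inverse_on n A A'" and A_inverse': "inverse_on n A' A"
    and B_inverse: "inverse_on n B B'" and B_inverse': "inverse_on n B' B"
    and g_cancel: "aff_mult (aff_mult h (g i)) (g' i) = h"
    and g_cancel': "aff_mult (aff_mult h (g' i)) (g i) = h"
begin

fun act :: "sym \<Rightarrow> (aff \<Rightarrow> 'k) \<Rightarrow> aff \<Rightarrow> 'k" where
  "act (U a b) f h = (\<Sum>i\<in>{1..n}. A a i * B i b * f (aff_mult h (g i)))"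
| "act (Ustar a b) f h = (\<Sum>j\<in>{1..n}. A' j a * B' b j * f (aff_mult h (g' j)))"

primrec act_word :: "sym list \<Rightarrow> (aff \<Rightarrow> 'k) \<Rightarrow> aff \<Rightarrow> 'k" where
  "act_word [] f = f"
| "act_word (x # w) f = act x (act_word w f)"

lemma act_word_append: "act_word (u @ w) f = act_word u (act_word w f)"
  by (induction u) auto

lemma act_sum: "act x (\<lambda>h. \<Sum>s\<in>S. c s * F s h) h0 = (\<Sum>s\<in>S. c s * act x (F s) h0)"
  by (cases x) (simp_all add: sum_distrib_left mult_ac sum.swap[of _ S])

lemma act_word_sum:
  "act_word w (\<lambda>h. \<Sum>s\<in>S. c s * F s h) = (\<lambda>h. \<Sum>s\<in>S. c s * act_word w (F s) h)"
  by (induction w) (simp_all add: act_sum)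

lemma act_word_zero: "act_word w (\<lambda>_. 0) h = 0"
  using act_word_sum[where w = w and S = "{}"] by simp

lemma U_Ustar_row: "a \<in> {1..n} \<Longrightarrow> c \<in> {1..n} \<Longrightarrow>
    (\<Sum>b\<in>{1..n}. act (U a b) (act (Ustar c b) f) h) = (if a = c then f h else 0)"
proof -
  assume ac: "a \<in> {1..n}" "c \<in> {1..n}"
  have "(\<Sum>b\<in>{1..n}. act (U a b) (act (Ustar c b) f) h)
      = (\<Sum>b\<in>{1..n}. \<Sum>i\<in>{1..n}. \<Sum>j\<in>{1..n}.
           B i b * B' b j * (A a i * A' j c * f (aff_mult (aff_mult h (g i)) (g' j))))"
    by (simp add: sum_distrib_left mult_ac)
  also have "\<dots> = (\<Sum>i\<in>{1..n}. A a i * A' i c * f (aff_mult (aff_mult h (g i)) (g' i)))"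
    by (rule inverse_on_contract[OF B_inverse])
  also have "\<dots> = (\<Sum>i\<in>{1..n}. A a i * A' i c) * f h"
    by (simp add: g_cancel sum_distrib_right)
  finally show ?thesis
    using A_inverse ac by (simp add: inverse_on_def)
qed

lemma U_Ustar_col: "b \<in> {1..n} \<Longrightarrow> d \<in> {1..n} \<Longrightarrow>
    (\<Sum>a\<in>{1..n}. act (U a b) (act (Ustar a d) f) h) = (if b = d then f h else 0)"
proof -
  assume bd: "b \<in> {1..n}" "d \<in> {1..n}"
  have "(\<Sum>a\<in>{1..n}. act (U a b) (act (Ustar a d) f) h)
      = (\<Sum>a\<in>{1..n}. \<Sum>i\<in>{1..n}. \<Sum>j\<in>{1..n}.
           A' j a * A a i * (B i b * B' d j * f (aff_mult (aff_mult h (g i)) (g' j))))"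
    by (simp add: sum_distrib_left mult_ac)
  also have "\<dots> = (\<Sum>a\<in>{1..n}. \<Sum>j\<in>{1..n}. \<Sum>i\<in>{1..n}.
           A' j a * A a i * (B i b * B' d j * f (aff_mult (aff_mult h (g i)) (g' j))))"
    by (rule sum.cong[OF refl], rule sum.swap)
  also have "\<dots> = (\<Sum>j\<in>{1..n}. B j b * B' d j * f (aff_mult (aff_mult h (g j)) (g' j)))"
    by (rule inverse_on_contract[OF A_inverse'])
  also have "\<dots> = (\<Sum>j\<in>{1..n}. B' d j * B j b) * f h"
    by (simp add: g_cancel sum_distrib_left sum_distrib_right mult_ac)
  finally show ?thesis
    using B_inverse' bd by (auto simp: inverse_on_def)
qed

lemma Ustar_U_row: "a \<in> {1..n} \<Longrightarrow> c \<in> {1..n} \<Longrightarrow>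
    (\<Sum>b\<in>{1..n}. act (Ustar a b) (act (U c b) f) h) = (if a = c then f h else 0)"
proof -
  assume ac: "a \<in> {1..n}" "c \<in> {1..n}"
  have "(\<Sum>b\<in>{1..n}. act (Ustar a b) (act (U c b) f) h)
      = (\<Sum>b\<in>{1..n}. \<Sum>j\<in>{1..n}. \<Sum>i\<in>{1..n}.
           B i b * B' b j * (A' j a * A c i * f (aff_mult (aff_mult h (g' j)) (g i))))"
    by (simp add: sum_distrib_left mult_ac)
  also have "\<dots> = (\<Sum>b\<in>{1..n}. \<Sum>i\<in>{1..n}. \<Sum>j\<in>{1..n}.
           B i b * B' b j * (A' j a * A c i * f (aff_mult (aff_mult h (g' j)) (g i))))"
    by (rule sum.cong[OF refl], rule sum.swap)
  also have "\<dots> = (\<Sum>i\<in>{1..n}. A' i a * A c i * f (aff_mult (aff_mult h (g' i)) (g i)))"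
    by (rule inverse_on_contract[OF B_inverse])
  also have "\<dots> = (\<Sum>i\<in>{1..n}. A c i * A' i a) * f h"
    by (simp add: g_cancel' sum_distrib_left sum_distrib_right mult_ac)
  finally show ?thesis
    using A_inverse ac by (auto simp: inverse_on_def)
qed

lemma Ustar_U_col: "b \<in> {1..n} \<Longrightarrow> d \<in> {1..n} \<Longrightarrow>
    (\<Sum>a\<in>{1..n}. act (Ustar a b) (act (U a d) f) h) = (if b = d then f h else 0)"
proof -
  assume bd: "b \<in> {1..n}" "d \<in> {1..n}"
  have "(\<Sum>a\<in>{1..n}. act (Ustar a b) (act (U a d) f) h)
      = (\<Sum>a\<in>{1..n}. \<Sum>j\<in>{1..n}. \<Sum>i\<in>{1..n}.
           A' j a * A a i * (B' b j * B i d * f (aff_mult (aff_mult h (g' j)) (g i))))"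
    by (simp add: sum_distrib_left mult_ac)
  also have "\<dots> = (\<Sum>j\<in>{1..n}. B' b j * B j d * f (aff_mult (aff_mult h (g' j)) (g j)))"
    by (rule inverse_on_contract[OF A_inverse'])
  also have "\<dots> = (\<Sum>j\<in>{1..n}. B' b j * B j d) * f h"
    by (simp add: g_cancel' sum_distrib_right)
  finally show ?thesis
    using B_inverse' bd by (auto simp: inverse_on_def)
qed

lemma act_word_rel:
  assumes v: "v \<in> Mset n" and j: "j \<in> {1..n}" and i: "i \<in> {1..n}"
  shows "(\<Sum>s\<in>{1..n}. act_word [v j (rev_idx n s), mat_dag n v s (rev_idx n i)] f h)
    = (if j = i then f h else 0)"
  using v unfolding Mset_def
proof (elim insertE emptyE)
  assume "v = umat"
  then have "(\<Sum>s\<in>{1..n}. act_word [v j (rev_idx n s), mat_dag n v s (rev_idx n i)] f h)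
      = (\<Sum>s\<in>{1..n}. act (U j (rev_idx n s)) (act (Ustar i (rev_idx n s)) f) h)"
    using i by (simp add: umat_def mat_dag_def)
  also have "\<dots> = (\<Sum>b\<in>{1..n}. act (U j b) (act (Ustar i b) f) h)"
    by (rule sum_rev_idx)
  finally show ?thesis
    using U_Ustar_row[OF j i] by simp
next
  assume "v = mat_t umat"
  then have "(\<Sum>s\<in>{1..n}. act_word [v j (rev_idx n s), mat_dag n v s (rev_idx n i)] f h)
      = (\<Sum>s\<in>{1..n}. act (U (rev_idx n s) j) (act (Ustar (rev_idx n s) i) f) h)"
    using i by (simp add: umat_def mat_t_def mat_dag_def)
  also have "\<dots> = (\<Sum>a\<in>{1..n}. act (U a j) (act (Ustar a i) f) h)"
    by (rule sum_rev_idx)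
  finally show ?thesis
    using U_Ustar_col[OF j i] by simp
next
  assume "v = mat_star n umat"
  then have "(\<Sum>s\<in>{1..n}. act_word [v j (rev_idx n s), mat_dag n v s (rev_idx n i)] f h)
      = (\<Sum>s\<in>{1..n}. act (Ustar (rev_idx n j) s) (act (U (rev_idx n i) s) f) h)"
    using i by (intro sum.cong refl) (simp add: umat_def mat_star_def mat_dag_def)
  then show ?thesis
    using Ustar_U_row[OF rev_idx_mem[OF j] rev_idx_mem[OF i]] rev_idx_eq_iff[OF j i] by simp
next
  assume "v = mat_dag n umat"
  then have "(\<Sum>s\<in>{1..n}. act_word [v j (rev_idx n s), mat_dag n v s (rev_idx n i)] f h)
      = (\<Sum>s\<in>{1..n}. act (Ustar s (rev_idx n j)) (act (U s (rev_idx n i)) f) h)"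
    using i by (intro sum.cong refl) (simp add: umat_def mat_dag_def)
  then show ?thesis
    using Ustar_U_col[OF rev_idx_mem[OF j] rev_idx_mem[OF i]] rev_idx_eq_iff[OF j i] by simp
qed

lemma annihilates_act_word: "annihilates (Iideal n) (\<lambda>w. act_word w f h)"
  unfolding Iideal_def
proof (rule annihilates_ideal_gen)
  show "finite {w. r w \<noteq> 0}" if "r \<in> Rset n" for r :: "'k fpoly"
    using that by (auto simp: Rset_def finite_support_rel)
  fix r :: "'k fpoly" and a b assume "r \<in> Rset n"
  then obtain v j i where v: "v \<in> Mset n" and ji: "j \<in> {1..n}" "i \<in> {1..n}"
    and r: "r = rel n v j i"
    unfolding Rset_def by blast
  have "lin_ext (\<lambda>x. act_word (a @ x @ b) f h) r
      = act_word a (\<lambda>h'. lin_ext (\<lambda>x. act_word x (act_word b f) h') r) h"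
    by (simp add: lin_ext_def act_word_append act_word_sum)
  also have "(\<lambda>h'. lin_ext (\<lambda>x. act_word x (act_word b f) h') r) = (\<lambda>_. 0)"
  proof
    fix h'
    show "lin_ext (\<lambda>x. act_word x (act_word b f) h') r = 0"
      unfolding r lin_ext_rel using act_word_rel[OF v ji, of "act_word b f" h'] by simp
  qed
  finally show "lin_ext (\<lambda>x. act_word (a @ x @ b) f h) r = 0"
    by (simp add: act_word_zero)
qed

end

(* (2, -2) = g_p g_q^-1 and (2, -1) = g_q^-1 g_p are not products of fewer than two
   generator values and arise as a product of two of them in exactly one way. *)
definition aff_gen :: "nat \<Rightarrow> nat \<Rightarrow> nat \<Rightarrow> aff" where
  "aff_gen p q i = (if i = p then (2, 0) else if i = q then (1, 1) else (1, 0))"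

definition aff_gen_inv :: "nat \<Rightarrow> nat \<Rightarrow> nat \<Rightarrow> aff" where
  "aff_gen_inv p q i = (if i = p then (1/2, 0) else if i = q then (1, -1) else (1, 0))"

lemma aff_gen_cancel: "aff_mult (aff_mult h (aff_gen p q i)) (aff_gen_inv p q i) = h"
  by (cases h) (auto simp: aff_gen_def aff_gen_inv_def)

lemma aff_gen_inv_cancel: "aff_mult (aff_mult h (aff_gen_inv p q i)) (aff_gen p q i) = h"
  by (cases h) (auto simp: aff_gen_def aff_gen_inv_def)

locale affine_rep = relation_rep n A A' B B' "aff_gen p q" "aff_gen_inv p q"
  for n :: nat and A A' B B' :: "nat \<Rightarrow> nat \<Rightarrow> 'k::field" and p q :: nat +
  assumes p_neq_q: "p \<noteq> q" and p_mem: "p \<in> {1..n}" and q_mem: "q \<in> {1..n}"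
begin

definition eval :: "aff \<Rightarrow> sym list \<Rightarrow> 'k" where
  "eval \<gamma> w = act_word w (\<lambda>h. if h = \<gamma> then 1 else 0) (1, 0)"

lemma act_U_vanishes:
  "(\<And>e. e \<in> {(2, 0), (1, 1), (1, 0)} \<Longrightarrow> f (aff_mult h e) = 0) \<Longrightarrow> act (U a b) f h = 0"
  by (auto intro!: sum.neutral simp: aff_gen_def)

lemma act_Ustar_vanishes:
  "(\<And>e. e \<in> {(1/2, 0), (1, -1), (1, 0)} \<Longrightarrow> f (aff_mult h e) = 0) \<Longrightarrow> act (Ustar a b) f h = 0"
  by (auto intro!: sum.neutral simp: aff_gen_inv_def)

lemma eval_vanishes:
  assumes \<gamma>: "\<gamma> \<in> {(2, -2), (2, -1)}" and len: "length w \<le> 2"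
    and not_US: "\<And>a b c d. w = [U a b, Ustar c d] \<Longrightarrow> \<gamma> \<noteq> (2, -2)"
    and not_SU: "\<And>a b c d. w = [Ustar a b, U c d] \<Longrightarrow> \<gamma> \<noteq> (2, -1)"
  shows "eval \<gamma> w = 0"
proof -
  consider "w = []" | x where "w = [x]" | x y where "w = [x, y]"
    using len by (auto simp: le_Suc_eq numeral_2_eq_2 length_Suc_conv)
  then show ?thesis
  proof cases
    case 1
    then show ?thesis using \<gamma> by (auto simp: eval_def)
  next
    case (2 x)
    then show ?thesis using \<gamma>
      by (cases x) (auto simp: eval_def simp del: act.simps intro!: act_U_vanishes act_Ustar_vanishes)
  next
    case (3 x y)
    then show ?thesis using \<gamma> not_US not_SU
      by (cases x; cases y)
         (auto simp: eval_def simp del: act.simps intro!: act_U_vanishes act_Ustar_vanishes)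
  qed
qed

lemma eval_U_Ustar: "eval (2, -2) [U a b, Ustar c d] = A a p * B p b * A' q c * B' d q"
proof -
  have "act (Ustar c d) (\<lambda>h. if h = (2, -2) then 1 else 0) (aff_mult (1, 0) (aff_gen p q i))
      = (if i = p then A' q c * B' d q else 0)" for i
  proof -
    have "aff_mult (aff_mult (1, 0) (aff_gen p q i)) (aff_gen_inv p q j) = (2, -2)
        \<longleftrightarrow> i = p \<and> j = q" for j
      using p_neq_q by (auto simp: aff_gen_def aff_gen_inv_def)
    then show ?thesis
      using q_mem by (simp add: if_distrib[of "\<lambda>x. _ * x"] cong: if_cong)
  qed
  then show ?thesis
    using p_mem by (simp add: eval_def if_distrib[of "\<lambda>x. _ * x"] mult.assoc cong: if_cong)
qed

lemma eval_Ustar_U: "eval (2, -1) [Ustar a b, U c d] = A' q a * B' b q * A c p * B p d"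
proof -
  have "act (U c d) (\<lambda>h. if h = (2, -1) then 1 else 0) (aff_mult (1, 0) (aff_gen_inv p q j))
      = (if j = q then A c p * B p d else 0)" for j
  proof -
    have "aff_mult (aff_mult (1, 0) (aff_gen_inv p q j)) (aff_gen p q i) = (2, -1)
        \<longleftrightarrow> i = p \<and> j = q" for i
      using p_neq_q by (auto simp: aff_gen_def aff_gen_inv_def)
    then show ?thesis
      using p_mem by (simp add: if_distrib[of "\<lambda>x. _ * x"] cong: if_cong)
  qed
  then show ?thesis
    using q_mem by (simp add: eval_def if_distrib[of "\<lambda>x. _ * x"] mult.assoc cong: if_cong)
qed

lemma annihilates_eval: "annihilates (Iideal n) (eval \<gamma>)"
  using annihilates_act_word unfolding eval_def .

end

section \<open>Test functionals built from elementary matrices\<close>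

definition elementary :: "'k::field \<Rightarrow> nat \<Rightarrow> nat \<Rightarrow> nat \<Rightarrow> nat \<Rightarrow> 'k" where
  "elementary t x y i j = (if i = j then 1 else 0) + (if i = x \<and> j = y then t else 0)"

lemma elementary_transpose: "elementary t y x j i = elementary t x y i j"
  by (auto simp: elementary_def)

lemma inverse_on_elementary:
  assumes "x \<noteq> y" "y \<in> {1..n}"
  shows "inverse_on n (elementary t x y) (elementary (-t) x y)"
  unfolding inverse_on_def
proof (intro ballI)
  fix i j assume "i \<in> {1..n}" "j \<in> {1..n}"
  then have "(\<Sum>k\<in>{1..n}. elementary t x y i k * elementary (-t) x y k j)
      = (\<Sum>k\<in>{1..n}. (if k = i then (if i = j then 1 else 0) + (if i = x \<and> j = y then -t else 0) else 0)
          + (if k = y then (if i = x \<and> y = j then t else 0) else 0))"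
    using assms by (intro sum.cong refl) (auto simp: elementary_def)
  also have "\<dots> = (if i = j then 1 else 0)"
    using assms \<open>i \<in> {1..n}\<close> by (simp add: sum.distrib)
  finally show "(\<Sum>k\<in>{1..n}. elementary t x y i k * elementary (-t) x y k j) = (if i = j then 1 else 0)" .
qed

lemma inverse_on_permute:
  assumes "inverse_on n X Y" and \<sigma>: "bij_betw \<sigma> {1..n} {1..n}"
  shows "inverse_on n (\<lambda>i. X (\<sigma> i)) (\<lambda>k j. Y k (\<sigma> j))"
  using assms bij_betw_apply[OF \<sigma>] bij_betw_imp_inj_on[OF \<sigma>]
  by (auto simp: inverse_on_def inj_on_eq_iff)

lemma inverse_on_permute':
  assumes "inverse_on n Y X" and \<sigma>: "bij_betw \<sigma> {1..n} {1..n}"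
  shows "inverse_on n (\<lambda>i k. Y i (\<sigma> k)) (\<lambda>k. X (\<sigma> k))"
  using assms sum.reindex_bij_betw[OF \<sigma>, of "\<lambda>k. Y _ k * X k _"]
  by (simp add: inverse_on_def)

definition move_pair :: "nat \<Rightarrow> nat \<Rightarrow> nat \<Rightarrow> nat \<Rightarrow> nat \<Rightarrow> nat" where
  "move_pair p q p' q' = transpose (transpose p p' q) q' \<circ> transpose p p'"

lemma bij_betw_move_pair:
  "p \<in> A \<Longrightarrow> q \<in> A \<Longrightarrow> p' \<in> A \<Longrightarrow> q' \<in> A \<Longrightarrow> bij_betw (move_pair p q p' q') A A"
  unfolding move_pair_def
  by (intro bij_betw_trans[where B = A] bij_betw_transpose_iff) (auto simp: transpose_def)

lemma move_pair_first: "p \<noteq> q \<Longrightarrow> p' \<noteq> q' \<Longrightarrow> move_pair p q p' q' p = p'"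
  by (auto simp: move_pair_def transpose_def)

lemma move_pair_second: "p \<noteq> q \<Longrightarrow> move_pair p q p' q' q = q'"
  by (auto simp: move_pair_def transpose_def)

lemma affine_rep_elementary:
  assumes "x \<noteq> y" "x' \<noteq> y'" "p \<noteq> q" and "{x, y, x', y', p, q, p', q'} \<subseteq> {1..n}"
  shows "affine_rep n (elementary t x y) (elementary (-t) x y)
    (\<lambda>i. elementary t' x' y' (move_pair p q p' q' i))
    (\<lambda>k j. elementary (-t') x' y' k (move_pair p q p' q' j)) p q"
proof -
  have \<sigma>: "bij_betw (move_pair p q p' q') {1..n} {1..n}"
    using assms(4) by (intro bij_betw_move_pair) auto
  show ?thesis
  proof unfold_locales
    show "inverse_on n (elementary t x y) (elementary (-t) x y)"
      and "inverse_on n (elementary (-t) x y) (elementary t x y)"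
      using assms inverse_on_elementary[of x y n t] inverse_on_elementary[of x y n "-t"] by auto
    show "inverse_on n (\<lambda>i. elementary t' x' y' (move_pair p q p' q' i))
        (\<lambda>k j. elementary (-t') x' y' k (move_pair p q p' q' j))"
      using assms inverse_on_elementary[of x' y' n t'] by (intro inverse_on_permute[OF _ \<sigma>]) auto
    show "inverse_on n (\<lambda>k j. elementary (-t') x' y' k (move_pair p q p' q' j))
        (\<lambda>i. elementary t' x' y' (move_pair p q p' q' i))"
      using assms inverse_on_elementary[of x' y' n "-t'"] by (intro inverse_on_permute'[OF _ \<sigma>]) auto
  qed (use assms in \<open>auto simp: aff_gen_cancel aff_gen_inv_cancel\<close>)
qed

type_synonym 'k conj_term = "'k \<times> 'k \<times> nat \<times> nat \<times> nat \<times> nat"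

(* Entry (i, j) of l (I + t E_xy) E_pq (I - t E_xy). *)
fun conj_entry :: "'k::field conj_term \<Rightarrow> nat \<Rightarrow> nat \<Rightarrow> 'k" where
  "conj_entry (l, t, x, y, p, q) i j = l * elementary t x y i p * elementary (-t) x y q j"

definition conj_sum :: "'k::field conj_term list \<Rightarrow> nat \<Rightarrow> nat \<Rightarrow> 'k" where
  "conj_sum Ts i j = (\<Sum>T\<leftarrow>Ts. conj_entry T i j)"

fun admissible :: "nat \<Rightarrow> 'k conj_term \<Rightarrow> bool" where
  "admissible n (l, t, x, y, p, q) \<longleftrightarrow> x \<noteq> y \<and> p \<noteq> q \<and> {x, y, p, q} \<subseteq> {1..n}"

(* The right factor uses transposed elementary matrices, permuted by move_pair p q p' q',
   so that the value on U a b \<cdot> Ustar c d factors as conj_entry L a c * conj_entry R b d. *)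
fun eval_US :: "nat \<Rightarrow> 'k::field conj_term \<Rightarrow> 'k conj_term \<Rightarrow> sym list \<Rightarrow> 'k" where
  "eval_US n (l, t, x, y, p, q) (m, t', x', y', p', q') w = l * m *
     affine_rep.eval n (elementary t x y) (elementary (-t) x y)
       (\<lambda>i. elementary t' y' x' (move_pair p q p' q' i))
       (\<lambda>k j. elementary (-t') y' x' k (move_pair p q p' q' j)) p q (2, -2) w"

fun eval_SU :: "nat \<Rightarrow> 'k::field conj_term \<Rightarrow> 'k conj_term \<Rightarrow> sym list \<Rightarrow> 'k" where
  "eval_SU n (l, t, x, y, p, q) (m, t', x', y', p', q') w = l * m *
     affine_rep.eval n (elementary (-t) y x) (elementary t y x)
       (\<lambda>i. elementary (-t') x' y' (move_pair q p q' p' i))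
       (\<lambda>k j. elementary t' x' y' k (move_pair q p q' p' j)) q p (2, -1) w"

lemma affine_rep_US:
  assumes "admissible n (l, t, x, y, p, q)" "admissible n (m, t', x', y', p', q')"
  shows "affine_rep n (elementary t x y) (elementary (-t) x y)
    (\<lambda>i. elementary t' y' x' (move_pair p q p' q' i))
    (\<lambda>k j. elementary (-t') y' x' k (move_pair p q p' q' j)) p q"
  using assms by (intro affine_rep_elementary) auto

lemma affine_rep_SU:
  assumes "admissible n (l, t, x, y, p, q)" "admissible n (m, t', x', y', p', q')"
  shows "affine_rep n (elementary (-t) y x) (elementary t y x)
    (\<lambda>i. elementary (-t') x' y' (move_pair q p q' p' i))
    (\<lambda>k j. elementary t' x' y' k (move_pair q p q' p' j)) q p"
  using assms affine_rep_elementary[where t = "-t" and t' = "-t'" and x = y and y = x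
      and p = q and q = p and p' = q' and q' = p'] by auto

lemma eval_US_properties:
  assumes "admissible n L" "admissible n R"
  shows annihilates_eval_US: "annihilates (Iideal n) (eval_US n L R)"
    and eval_US_vanishes: "\<lbrakk>length w \<le> 2; \<And>a b c d. w \<noteq> [U a b, Ustar c d]\<rbrakk> \<Longrightarrow> eval_US n L R w = 0"
    and eval_US_U_Ustar: "eval_US n L R [U a b, Ustar c d] = conj_entry L a c * conj_entry R b d"
proof -
  obtain l t x y p q where L: "L = (l, t, x, y, p, q)" by (cases L) auto
  obtain m t' x' y' p' q' where R: "R = (m, t', x', y', p', q')" by (cases R) auto
  interpret affine_rep n "elementary t x y" "elementary (-t) x y"
    "\<lambda>i. elementary t' y' x' (move_pair p q p' q' i)"
    "\<lambda>k j. elementary (-t') y' x' k (move_pair p q p' q' j)" p q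
    using assms unfolding L R by (rule affine_rep_US)
  have "eval_US n L R = (\<lambda>w. l * m * eval (2, -2) w)"
    by (simp add: L R fun_eq_iff)
  then show "annihilates (Iideal n) (eval_US n L R)"
    using annihilates_scale[OF annihilates_eval] by simp
  show "eval_US n L R w = 0" if "length w \<le> 2" "\<And>a b c d. w \<noteq> [U a b, Ustar c d]"
  proof -
    have "eval (2, -2) w = 0"
      by (rule eval_vanishes) (use that in auto)
    then show ?thesis by (simp add: L R)
  qed
  show "eval_US n L R [U a b, Ustar c d] = conj_entry L a c * conj_entry R b d"
    using assms by (simp add: L R eval_U_Ustar move_pair_first move_pair_second
        elementary_transpose[of t' x' y'] elementary_transpose[of "-t'" x' y'] mult_ac)
qed

lemma eval_SU_properties:
  assumes "admissible n L" "admissible n R"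
  shows annihilates_eval_SU: "annihilates (Iideal n) (eval_SU n L R)"
    and eval_SU_vanishes: "\<lbrakk>length w \<le> 2; \<And>a b c d. w \<noteq> [Ustar a b, U c d]\<rbrakk> \<Longrightarrow> eval_SU n L R w = 0"
    and eval_SU_Ustar_U: "eval_SU n L R [Ustar a b, U c d] = conj_entry L a c * conj_entry R b d"
proof -
  obtain l t x y p q where L: "L = (l, t, x, y, p, q)" by (cases L) auto
  obtain m t' x' y' p' q' where R: "R = (m, t', x', y', p', q')" by (cases R) auto
  interpret affine_rep n "elementary (-t) y x" "elementary t y x"
    "\<lambda>i. elementary (-t') x' y' (move_pair q p q' p' i)"
    "\<lambda>k j. elementary t' x' y' k (move_pair q p q' p' j)" q p
    using assms unfolding L R by (rule affine_rep_SU)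
  have "eval_SU n L R = (\<lambda>w. l * m * eval (2, -1) w)"
    by (simp add: L R fun_eq_iff)
  then show "annihilates (Iideal n) (eval_SU n L R)"
    using annihilates_scale[OF annihilates_eval] by simp
  show "eval_SU n L R w = 0" if "length w \<le> 2" "\<And>a b c d. w \<noteq> [Ustar a b, U c d]"
  proof -
    have "eval (2, -1) w = 0"
      by (rule eval_vanishes) (use that in auto)
    then show ?thesis by (simp add: L R)
  qed
  show "eval_SU n L R [Ustar a b, U c d] = conj_entry L a c * conj_entry R b d"
    using assms by (simp add: L R eval_Ustar_U move_pair_first move_pair_second
        elementary_transpose[of t x y] elementary_transpose[of "-t" x y] mult_ac)
qed

definition functional_US :: "nat \<Rightarrow> 'k::field conj_term list \<Rightarrow> 'k conj_term list \<Rightarrow> sym list \<Rightarrow> 'k" where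
  "functional_US n Ls Rs w = (\<Sum>L\<leftarrow>Ls. \<Sum>R\<leftarrow>Rs. eval_US n L R w)"

definition functional_SU :: "nat \<Rightarrow> 'k::field conj_term list \<Rightarrow> 'k conj_term list \<Rightarrow> sym list \<Rightarrow> 'k" where
  "functional_SU n Ls Rs w = (\<Sum>L\<leftarrow>Ls. \<Sum>R\<leftarrow>Rs. eval_SU n L R w)"

lemma functional_US_properties:
  assumes "\<forall>L\<in>set Ls. admissible n L" "\<forall>R\<in>set Rs. admissible n R"
  shows "annihilates (Iideal n) (functional_US n Ls Rs)"
    and "\<lbrakk>length w \<le> 2; \<And>a b c d. w \<noteq> [U a b, Ustar c d]\<rbrakk> \<Longrightarrow> functional_US n Ls Rs w = 0"
    and "functional_US n Ls Rs [U a b, Ustar c d] = conj_sum Ls a c * conj_sum Rs b d"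
proof -
  show "annihilates (Iideal n) (functional_US n Ls Rs)"
    unfolding functional_US_def using assms
    by (intro annihilates_sum_list annihilates_eval_US) auto
  show "functional_US n Ls Rs w = 0" if "length w \<le> 2" "\<And>a b c d. w \<noteq> [U a b, Ustar c d]"
  proof -
    have "functional_US n Ls Rs w = (\<Sum>L\<leftarrow>Ls. \<Sum>R\<leftarrow>Rs. 0)"
      unfolding functional_US_def using assms
      by (intro arg_cong[where f = sum_list] map_cong refl eval_US_vanishes) (use that in auto)
    then show ?thesis by simp
  qed
  have "functional_US n Ls Rs [U a b, Ustar c d]
      = (\<Sum>L\<leftarrow>Ls. \<Sum>R\<leftarrow>Rs. conj_entry L a c * conj_entry R b d)"
    unfolding functional_US_def using assms
    by (intro arg_cong[where f = sum_list] map_cong refl) (simp add: eval_US_U_Ustar)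
  then show "functional_US n Ls Rs [U a b, Ustar c d] = conj_sum Ls a c * conj_sum Rs b d"
    by (simp add: conj_sum_def sum_list_const_mult sum_list_mult_const)
qed

lemma functional_SU_properties:
  assumes "\<forall>L\<in>set Ls. admissible n L" "\<forall>R\<in>set Rs. admissible n R"
  shows "annihilates (Iideal n) (functional_SU n Ls Rs)"
    and "\<lbrakk>length w \<le> 2; \<And>a b c d. w \<noteq> [Ustar a b, U c d]\<rbrakk> \<Longrightarrow> functional_SU n Ls Rs w = 0"
    and "functional_SU n Ls Rs [Ustar a b, U c d] = conj_sum Ls a c * conj_sum Rs b d"
proof -
  show "annihilates (Iideal n) (functional_SU n Ls Rs)"
    unfolding functional_SU_def using assms
    by (intro annihilates_sum_list annihilates_eval_SU) auto
  show "functional_SU n Ls Rs w = 0" if "length w \<le> 2" "\<And>a b c d. w \<noteq> [Ustar a b, U c d]"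
  proof -
    have "functional_SU n Ls Rs w = (\<Sum>L\<leftarrow>Ls. \<Sum>R\<leftarrow>Rs. 0)"
      unfolding functional_SU_def using assms
      by (intro arg_cong[where f = sum_list] map_cong refl eval_SU_vanishes) (use that in auto)
    then show ?thesis by simp
  qed
  have "functional_SU n Ls Rs [Ustar a b, U c d]
      = (\<Sum>L\<leftarrow>Ls. \<Sum>R\<leftarrow>Rs. conj_entry L a c * conj_entry R b d)"
    unfolding functional_SU_def using assms
    by (intro arg_cong[where f = sum_list] map_cong refl) (simp add: eval_SU_Ustar_U)
  then show "functional_SU n Ls Rs [Ustar a b, U c d] = conj_sum Ls a c * conj_sum Rs b d"
    by (simp add: conj_sum_def sum_list_const_mult sum_list_mult_const)
qed

(* conj_sum (witness m a c) is the matrix E_ac if a \<noteq> c, and E_aa - E_mm + E_ma if a = c. *)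
definition witness :: "nat \<Rightarrow> nat \<Rightarrow> nat \<Rightarrow> 'k::field conj_term list" where
  "witness m a c =
     (if a \<noteq> c then [(1, 0, a, c, a, c)] else [(-1, 1, m, a, a, m), (1, 0, a, m, a, m)])"

lemma admissible_witness:
  "{a, c, m} \<subseteq> {1..n} \<Longrightarrow> (a, c) \<noteq> (m, m) \<Longrightarrow> \<forall>T\<in>set (witness m a c). admissible n T"
  by (auto simp: witness_def)

lemma conj_sum_witness_pivot: "(a, c) \<noteq> (m, m) \<Longrightarrow> conj_sum (witness m a c) a c = 1"
  by (auto simp: witness_def conj_sum_def elementary_def)

lemma conj_sum_witness_eq_0:
  "(a, c) \<noteq> (m, m) \<Longrightarrow> (i, j) \<noteq> (a, c) \<Longrightarrow> \<not> (a = c \<and> i = m) \<Longrightarrow> conj_sum (witness m a c) i j = 0"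
  by (auto simp: witness_def conj_sum_def elementary_def)

lemma U_Ustar_notin_Tip:
  assumes range: "{a, b, c, d} \<subseteq> {1..n}" and ac: "(a, c) \<noteq> (n, n)" and bd: "(b, d) \<noteq> (n, n)"
  shows "[U a b, Ustar c d] \<notin> Tip (Iideal n :: 'k::field fpoly set)"
proof -
  let ?L = "witness n a c :: 'k conj_term list" and ?R = "witness n b d :: 'k conj_term list"
  have "\<forall>T\<in>set ?L. admissible n T" "\<forall>T\<in>set ?R. admissible n T"
    using range ac bd by (intro admissible_witness; auto)+
  note \<Psi> = functional_US_properties[OF this]
  show ?thesis
  proof (rule notin_Tip_if_annihilated[OF finite_support_Iideal \<Psi>(1)])
    show "functional_US n ?L ?R [U a b, Ustar c d] \<noteq> 0"
      using ac bd by (simp add: \<Psi>(3) conj_sum_witness_pivot)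
    fix w assume "mono_less w [U a b, Ustar c d]"
    then show "functional_US n ?L ?R w = 0"
    proof (cases rule: mono_less_length2E)
      case 1
      then show ?thesis by (intro \<Psi>(2)) auto
    next
      case (2 x y)
      show ?thesis
      proof (cases "\<exists>a' b' c' d'. w = [U a' b', Ustar c' d']")
        case True
        then obtain a' b' c' d' where w: "w = [U a' b', Ustar c' d']" by blast
        with 2 have "a' < a \<or> (a' = a \<and> b' < b) \<or> (a' = a \<and> b' = b \<and> (c < c' \<or> (c' = c \<and> d < d')))"
          by auto
        then have "conj_sum ?L a' c' = 0 \<or> conj_sum ?R b' d' = 0"
          using range ac bd by (auto intro!: conj_sum_witness_eq_0)
        then show ?thesis unfolding w \<Psi>(3) by auto
      next
        case False
        with 2 show ?thesis by (intro \<Psi>(2)) auto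
      qed
    qed
  qed
qed

lemma Ustar_U_notin_Tip:
  assumes range: "{a, b, c, d} \<subseteq> {1..n}" and ac: "(a, c) \<noteq> (1, 1)" and bd: "(b, d) \<noteq> (1, 1)"
  shows "[Ustar a b, U c d] \<notin> Tip (Iideal n :: 'k::field fpoly set)"
proof -
  let ?L = "witness 1 a c :: 'k conj_term list" and ?R = "witness 1 b d :: 'k conj_term list"
  have "\<forall>T\<in>set ?L. admissible n T" "\<forall>T\<in>set ?R. admissible n T"
    using range ac bd by (intro admissible_witness; auto)+
  note \<Psi> = functional_SU_properties[OF this]
  show ?thesis
  proof (rule notin_Tip_if_annihilated[OF finite_support_Iideal \<Psi>(1)])
    show "functional_SU n ?L ?R [Ustar a b, U c d] \<noteq> 0"
      unfolding \<Psi>(3) using ac bd by (simp add: conj_sum_witness_pivot)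
    fix w assume "mono_less w [Ustar a b, U c d]"
    then show "functional_SU n ?L ?R w = 0"
    proof (cases rule: mono_less_length2E)
      case 1
      then show ?thesis by (intro \<Psi>(2)) auto
    next
      case (2 x y)
      show ?thesis
      proof (cases "\<exists>a' b' c' d'. w = [Ustar a' b', U c' d']")
        case True
        then obtain a' b' c' d' where w: "w = [Ustar a' b', U c' d']" by blast
        with 2 have "a < a' \<or> (a' = a \<and> b < b') \<or> (a' = a \<and> b' = b \<and> (c' < c \<or> (c' = c \<and> d' < d)))"
          by auto
        then have "conj_sum ?L a' c' = 0 \<or> conj_sum ?R b' d' = 0"
          using range ac bd by (auto intro!: conj_sum_witness_eq_0)
        then show ?thesis unfolding w \<Psi>(3) by auto
      next
        case False
        with 2 show ?thesis by (intro \<Psi>(2)) auto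
      qed
    qed
  qed
qed

section \<open>Leading monomials of degree two\<close>

lemma sym_less_irrefl: "\<not> sym_less x x"
  by (cases x) auto

lemma Mset_row_less_last: "v \<in> Mset n \<Longrightarrow> s \<in> {1..n} \<Longrightarrow> s \<noteq> n \<Longrightarrow> sym_less (v j s) (v j n)"
  by (auto simp: Mset_def umat_def mat_t_def mat_star_def mat_dag_def rev_idx_def)

lemma is_tip_rel:
  assumes v: "v \<in> Mset n" and j: "j \<in> {1..n}" and i: "i \<in> {1..n}"
  shows "is_tip (rel n v j i :: 'k::field fpoly) [v j n, mat_dag n v 1 (rev_idx n i)]"
proof -
  let ?ws = "\<lambda>s. [v j (rev_idx n s), mat_dag n v s (rev_idx n i)]"
  have first_less: "sym_less (v j (rev_idx n s)) (v j n)" if "s \<in> {1..n}" "s \<noteq> 1" for s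
    using Mset_row_less_last[OF v rev_idx_mem[OF that(1)]] rev_idx_eq_n_iff[OF that(1)] that(2)
    by simp
  have ws_eq: "?ws 1 = ?ws s \<longleftrightarrow> s = 1" if "s \<in> {1..n}" for s
    using first_less[OF that] sym_less_irrefl by (cases "s = 1") (auto simp: rev_idx_def)
  have w0: "?ws 1 = [v j n, mat_dag n v 1 (rev_idx n i)]"
    by simp
  have "rel n v j i (?ws 1) = (\<Sum>s\<in>{1..n}. if ?ws 1 = ?ws s then 1 else (0::'k))"
    by (simp add: rel_def monom_def)
  also have "\<dots> = (\<Sum>s\<in>{1..n}. if s = 1 then 1 else (0::'k))"
    using ws_eq by (intro sum.cong refl) simp
  also have "\<dots> = 1"
    using j by simp
  finally have rel_w0: "rel n v j i (?ws 1) = (1::'k)" .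
  have "w = ?ws 1 \<or> mono_less w (?ws 1)" if "(rel n v j i :: 'k fpoly) w \<noteq> 0" for w
  proof -
    from support_rel_subset that
    consider s where "s \<in> {1..n}" "w = ?ws s" | "w = []"
      by blast
    then show ?thesis
    proof cases
      case (1 s)
      then show ?thesis
        using first_less[OF 1(1)] by (cases "s = 1") (auto simp: mono_less_def intro!: exI[of _ 0])
    qed (simp add: mono_less_def)
  qed
  with rel_w0 show ?thesis
    unfolding is_tip_def w0[symmetric] by simp
qed

lemma Mset_word_in_Tip:
  assumes v: "v \<in> Mset n" and j1: "j1 \<in> {1..n}" and j2: "j2 \<in> {1..n}"
  shows "[v j1 n, mat_dag n v 1 j2] \<in> Tip (Iideal n :: 'k::field fpoly set)"
proof -
  let ?P = "rel n v j1 (rev_idx n j2) :: 'k fpoly"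
  have "?P \<in> Iideal n"
    unfolding Iideal_def Rset_def using v j1 rev_idx_mem[OF j2] by (intro ideal_gen.gen) blast
  moreover have "is_tip ?P [v j1 n, mat_dag n v 1 j2]"
    using is_tip_rel[OF v j1 rev_idx_mem[OF j2]] j2 by simp
  moreover from this have "?P \<noteq> (\<lambda>_. 0)"
    by (auto simp: is_tip_def)
  ultimately show ?thesis
    unfolding Tip_def by blast
qed

lemma mat_t_apply: "mat_t v j i = v i j"
  by (simp add: mat_t_def)

lemma mat_dag_mat_t: "mat_dag n (mat_t v) i j = mat_dag n v j i"
  by (simp add: mat_dag_def mat_t_def)

lemma Mset_cases:
  assumes "v \<in> Mset n"
  obtains v0 where "v0 \<in> {umat, mat_star n umat}" and "v = v0 \<or> v = mat_t v0"
proof -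
  have "mat_dag n umat = mat_t (mat_star n umat)"
    by (simp add: fun_eq_iff mat_dag_def mat_t_def mat_star_def)
  with assms that show thesis
    unfolding Mset_def by blast
qed

lemma Mset_mat_t: "v \<in> Mset n \<Longrightarrow> mat_t v \<in> Mset n"
  by (auto simp: Mset_def fun_eq_iff mat_dag_def mat_t_def mat_star_def)

lemma Mset_word_notin_Tip:
  assumes v: "v \<in> Mset n" and range: "{j1, j2, i1, i2} \<subseteq> {1..n}"
    and i: "(i1, i2) \<noteq> (n, 1)" and j: "(j1, j2) \<noteq> (n, 1)"
  shows "[v j1 i1, mat_dag n v i2 j2] \<notin> Tip (Iideal n :: 'k::field fpoly set)"
proof -
  have base: "[v0 a1 b1, mat_dag n v0 b2 a2] \<notin> Tip (Iideal n :: 'k fpoly set)"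
    if v0: "v0 \<in> {umat, mat_star n umat}" and a: "a1 \<in> {1..n}" "a2 \<in> {1..n}"
      and b: "b1 \<in> {1..n}" "b2 \<in> {1..n}" and "(a1, a2) \<noteq> (n, 1)" "(b1, b2) \<noteq> (n, 1)"
    for v0 a1 a2 b1 b2
  proof -
    have "(a1, rev_idx n a2) \<noteq> (n, n)" "(b1, rev_idx n b2) \<noteq> (n, n)"
      "(rev_idx n a1, a2) \<noteq> (1, 1)" "(rev_idx n b1, b2) \<noteq> (1, 1)"
      using that by (auto simp: rev_idx_def)
    moreover note mem = a b rev_idx_mem[OF a(1)] rev_idx_mem[OF a(2)] rev_idx_mem[OF b(1)] rev_idx_mem[OF b(2)]
    ultimately show ?thesis
      using v0 U_Ustar_notin_Tip[of a1 b1 "rev_idx n a2" "rev_idx n b2" n]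
        Ustar_U_notin_Tip[of "rev_idx n a1" "rev_idx n b1" a2 b2 n]
      by (auto simp: umat_def mat_star_def mat_dag_def a b simp del: atLeastAtMost_iff)
  qed
  from v obtain v0 where "v0 \<in> {umat, mat_star n umat}" "v = v0 \<or> v = mat_t v0"
    by (rule Mset_cases)
  then show ?thesis
    using base[of v0 j1 j2 i1 i2] base[of v0 i1 i2 j1 j2] range i j
    by (auto simp: mat_dag_mat_t mat_t_apply)
qed

theorem lemma4p2:
  fixes n :: nat and v :: smat and j1 j2 i1 i2 :: nat
  assumes "n \<ge> 2" and "v \<in> Mset n"
    and "j1 \<in> {1..n}" and "j2 \<in> {1..n}" and "i1 \<in> {1..n}" and "i2 \<in> {1..n}"
  shows "[v j1 i1, mat_dag n v i2 j2] \<notin> Tip (Iideal n :: ('k::field) fpoly set)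
     \<longleftrightarrow> (i1, i2) \<noteq> (n, 1) \<and> (j1, j2) \<noteq> (n, 1)"
proof
  assume notin: "[v j1 i1, mat_dag n v i2 j2] \<notin> Tip (Iideal n :: 'k fpoly set)"
  show "(i1, i2) \<noteq> (n, 1) \<and> (j1, j2) \<noteq> (n, 1)"
  proof (intro conjI notI)
    assume "(i1, i2) = (n, 1)"
    then show False
      using notin Mset_word_in_Tip[OF assms(2-4), where 'k = 'k] by simp
  next
    assume "(j1, j2) = (n, 1)"
    then have "[v j1 i1, mat_dag n v i2 j2] = [mat_t v i1 n, mat_dag n (mat_t v) 1 i2]"
      by (simp add: mat_t_apply mat_dag_mat_t)
    then show False
      using notin Mset_word_in_Tip[OF Mset_mat_t[OF assms(2)] assms(5-6), where 'k = 'k] by simp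
  qed
next
  assume "(i1, i2) \<noteq> (n, 1) \<and> (j1, j2) \<noteq> (n, 1)"
  then show "[v j1 i1, mat_dag n v i2 j2] \<notin> Tip (Iideal n :: 'k fpoly set)"
    using Mset_word_notin_Tip[OF assms(2), where 'k = 'k] assms(3-6) by simp
qed

end
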